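(* Let $s>0$, $\lambda\geq 0$ and $f\in\mathbb{A}^s_\lambda$. Then for every integer $n\geq 2$, $$|f^n|_{s,\lambda}\leq K_{s,n}|f|_{0,\lambda}^{n-1}|f|_{s,\lambda},$$ where $K_{s,n}=n$ for $0<s\leq 1$ and $K_{s,n}=\sum_{j=1}^{n-1}(2K_s)^j=\frac{2K_s((2K_s)^{n-1}-1)}{2K_s-1}$ for $s>1$, with $K_s=2^{s-1}$ for $s>1$. Moreover, for $s=0$ and $f\in\mathbb{A}^0_\lambda$, $|f^n|_{0,\lambda}\leq |f|_{0,\lambda}^n$.
   Context: Let $\mathbb{T}=\mathbb{R}/2\pi\mathbb{Z}$. For $f\in L^1(\mathbb{T})$, $\widehat f(n)=\frac{1}{2\pi}\int_{\mathbb{T}}f(x)e^{-inx}\,dx$. For $s,\lambda\geq 0$ the Wiener space $\mathbb{A}^s_\lambda$ is the space of $f\in L^1(\mathbb{T})$ with finite norm $|f|_{s,\lambda}:=\sum_{n\in\mathbb{Z}}(1+|n|)^s e^{\lambda|n|}|\widehat f(n)|$. *)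

theory Defs
  imports "HOL-Analysis.Analysis"
begin

text \<open>Functions on the torus R/2piZ are represented as 2pi-periodic functions real => complex.\<close>

definition L1T :: "(real \<Rightarrow> complex) \<Rightarrow> bool" where
  "L1T f \<longleftrightarrow> (\<forall>x. f (x + 2 * pi) = f x) \<and> integrable (lebesgue_on {0..2*pi}) f"

definition fourier_coeff :: "(real \<Rightarrow> complex) \<Rightarrow> int \<Rightarrow> complex" where
  "fourier_coeff f n = (1 / (2 * pi)) *\<^sub>R
     integral\<^sup>L (lebesgue_on {0..2*pi}) (\<lambda>x. f x * exp (- \<i> * of_int n * of_real x))"

definition wiener_weight :: "real \<Rightarrow> real \<Rightarrow> int \<Rightarrow> real" where
  "wiener_weight s lam n = (1 + real_of_int \<bar>n\<bar>) powr s * exp (lam * real_of_int \<bar>n\<bar>)"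

definition wiener_space :: "real \<Rightarrow> real \<Rightarrow> (real \<Rightarrow> complex) set" where
  "wiener_space s lam = {f. L1T f \<and>
     (\<lambda>n. wiener_weight s lam n * cmod (fourier_coeff f n)) summable_on (UNIV :: int set)}"

definition wiener_norm :: "real \<Rightarrow> real \<Rightarrow> (real \<Rightarrow> complex) \<Rightarrow> real" where
  "wiener_norm s lam f = (\<Sum>\<^sub>\<infinity>n\<in>(UNIV :: int set). wiener_weight s lam n * cmod (fourier_coeff f n))"

definition K_s :: "real \<Rightarrow> real" where
  "K_s s = 2 powr (s - 1)"

definition K_sn :: "real \<Rightarrow> nat \<Rightarrow> real" where
  "K_sn s n = (if s \<le> 1 then real n else (\<Sum>j=1..n-1. (2 * K_s s) ^ j))"

end

theory Submission
  imports Defs "HOL-Library.Real_Mod"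
begin

text \<open>
  If f and g have absolutely summable Fourier coefficients, the coefficients of f g are the
  convolution of theirs. This rests on the uniqueness of Fourier coefficients in L^1: a function
  whose coefficients all vanish integrates to zero against every polynomial in cos and sin, hence
  (Stone-Weierstrass) against every continuous function on the circle, hence (Urysohn functions
  and regularity of Lebesgue measure) over every measurable set. The weights satisfy
  w_0(j+l) \<le> w_0(j) w_0(l) and w_s(j+l) \<le> C_s (w_s(j) w_0(l) + w_0(j) w_s(l)), where
  C_s = powr_sum_const s is 1 for s \<le> 1 and K_s for s > 1. Hence |f g|_0 \<le> |f|_0 |g|_0 and
  |f g|_s \<le> C_s (|f|_s |g|_0 + |f|_0 |g|_s), and induction on n yields the bound because
  C_s (K_{s,n} + 1) \<le> K_{s,n+1}.
\<close>

section \<open>Characters and absolutely convergent Fourier series\<close>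

abbreviation torus :: "real measure" where
  "torus \<equiv> lebesgue_on {0..2*pi}"

definition fourier_char :: "int \<Rightarrow> real \<Rightarrow> complex" where
  "fourier_char k x = exp (\<i> * of_int k * of_real x)"

lemma norm_fourier_char [simp]: "norm (fourier_char k x) = 1"
proof -
  have "fourier_char k x = exp (\<i> * of_real (of_int k * x))"
    unfolding fourier_char_def by (simp add: mult.assoc)
  then show ?thesis by (simp only: norm_exp_i_times)
qed

lemma fourier_char_0 [simp]: "fourier_char 0 x = 1"
  unfolding fourier_char_def by simp

lemma fourier_char_mult: "fourier_char j x * fourier_char k x = fourier_char (j + k) x"
  unfolding fourier_char_def by (simp add: exp_add[symmetric] algebra_simps)

lemma continuous_on_fourier_char: "continuous_on UNIV (fourier_char k)"
  unfolding fourier_char_def by (intro continuous_intros)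

lemma fourier_coeff_eq:
  "fourier_coeff g n = (1 / (2*pi)) *\<^sub>R integral\<^sup>L torus (\<lambda>x. g x * fourier_char (-n) x)"
  unfolding fourier_coeff_def fourier_char_def by simp

lemma has_integral_fourier_char:
  "(fourier_char m has_integral (if m = 0 then 2*pi else 0)) {0..2*pi}"
proof (cases "m = 0")
  case True
  have "fourier_char 0 = (\<lambda>x. 1)" by (rule ext) simp
  then show ?thesis
    using True has_integral_const_real[of "1::complex" 0 "2*pi"] by (simp add: scaleR_conv_of_real)
next
  case False
  define F where "F x = fourier_char m x / (\<i> * of_int m)" for x
  have "(F has_vector_derivative fourier_char m x) (at x within {0..2*pi})" for x
  proof -
    have "((\<lambda>z. exp (\<i> * of_int m * z) / (\<i> * of_int m)) has_field_derivative
            fourier_char m x) (at (of_real x))"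
      using False by (auto intro!: derivative_eq_intros simp: fourier_char_def)
    from has_vector_derivative_real_field[OF this] show ?thesis
      unfolding F_def[abs_def] fourier_char_def by simp
  qed
  then have "(fourier_char m has_integral (F (2*pi) - F 0)) {0..2*pi}"
    by (intro fundamental_theorem_of_calculus) auto
  moreover have "fourier_char m (2*pi) = 1"
    using exp_integer_2pi[of "of_int m"] by (simp add: fourier_char_def algebra_simps)
  ultimately show ?thesis
    using False by (simp add: F_def fourier_char_def)
qed

lemma borel_measurable_torus_continuous:
  fixes g :: "real \<Rightarrow> 'b::euclidean_space"
  assumes "continuous_on UNIV g"
  shows "g \<in> borel_measurable torus"
  using borel_measurable_continuous_onI[OF assms]
  by (simp add: measurable_completion measurable_restrict_space1)

lemma integrable_torus_continuous:
  fixes g :: "real \<Rightarrow> 'b::euclidean_space"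
  assumes "continuous_on UNIV g"
  shows "integrable torus g"
  using assms by (intro continuous_imp_integrable_real) (rule continuous_on_subset, auto)

lemma integral_fourier_char: "integral\<^sup>L torus (fourier_char m) = (if m = 0 then 2*pi else 0)"
proof -
  have "integral\<^sup>L torus (fourier_char m) = integral {0..2*pi} (fourier_char m)"
    by (intro lebesgue_integral_eq_integral integrable_torus_continuous continuous_on_fourier_char) auto
  then show ?thesis
    using integral_unique[OF has_integral_fourier_char] by simp
qed

lemma integrable_torus_mult_bounded:
  fixes h g :: "real \<Rightarrow> complex"
  assumes h: "integrable torus h" and g: "g \<in> borel_measurable torus"
    and bound: "\<And>x. x \<in> {0..2*pi} \<Longrightarrow> norm (g x) \<le> B"
  shows "integrable torus (\<lambda>x. h x * g x)"
proof (rule Bochner_Integration.integrable_bound)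
  show "integrable torus (\<lambda>x. B *\<^sub>R h x)" using h by simp
  show "(\<lambda>x. h x * g x) \<in> borel_measurable torus" using h g by measurable
  have "norm (h x * g x) \<le> norm (B *\<^sub>R h x)" if "x \<in> {0..2*pi}" for x
    using mult_left_mono[OF bound[OF that], of "norm (h x)"] abs_ge_self[of B]
      mult_left_mono[of B "\<bar>B\<bar>" "norm (h x)"]
    by (simp add: norm_mult mult.commute)
  then show "AE x in torus. norm (h x * g x) \<le> norm (B *\<^sub>R h x)"
    by (intro AE_I2) simp
qed

lemma integrable_torus_mult_continuous:
  fixes h g :: "real \<Rightarrow> complex"
  assumes h: "integrable torus h" and g: "continuous_on UNIV g"
  shows "integrable torus (\<lambda>x. h x * g x)"
proof -
  have "compact (g ` {0..2*pi})"
    by (rule compact_continuous_image[OF continuous_on_subset[OF g]]) auto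
  then obtain B where "\<And>x. x \<in> {0..2*pi} \<Longrightarrow> norm (g x) \<le> B"
    using compact_imp_bounded bounded_iff by (metis image_eqI)
  then show ?thesis
    using integrable_torus_mult_bounded[OF h borel_measurable_torus_continuous[OF g]] by blast
qed

lemma sums_int_decode_infsum:
  fixes p :: "int \<Rightarrow> 'a::banach"
  assumes "(\<lambda>k. norm (p k)) summable_on UNIV"
  shows "(\<lambda>n. p (int_decode n)) sums (\<Sum>\<^sub>\<infinity>k. p k)"
    and "summable (\<lambda>n. norm (p (int_decode n)))"
proof -
  have reindex: "((\<lambda>n. q (int_decode n)) has_sum (\<Sum>\<^sub>\<infinity>k. q k)) UNIV"
    if "q summable_on UNIV" for q :: "int \<Rightarrow> 'b::{comm_monoid_add,t2_space}"
    using has_sum_reindex_bij_betw[OF bij_int_decode, of q] has_sum_infsum[OF that] by blast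
  show "(\<lambda>n. p (int_decode n)) sums (\<Sum>\<^sub>\<infinity>k. p k)"
    by (rule has_sum_imp_sums[OF reindex[OF abs_summable_summable[OF assms]]])
  show "summable (\<lambda>n. norm (p (int_decode n)))"
    using has_sum_imp_sums[OF reindex[OF assms]] sums_summable by blast
qed

lemma summable_on_norm_mult_bounded:
  fixes c v :: "'a \<Rightarrow> 'b::real_normed_div_algebra"
  assumes c: "(\<lambda>k. norm (c k)) summable_on A" and bound: "\<And>k. norm (v k) \<le> D"
  shows "(\<lambda>k. norm (c k * v k)) summable_on A"
proof (rule summable_on_comparison_test)
  show "(\<lambda>k. norm (c k) * \<bar>D\<bar>) summable_on A"
    using c by (rule summable_on_cmult_left)
  show "norm (c k * v k) \<le> norm (c k) * \<bar>D\<bar>" for k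
    using mult_left_mono[OF order_trans[OF bound abs_ge_self], of "norm (c k)"]
    by (simp add: norm_mult)
qed simp

lemma (in finite_measure) integral_infsum_exchange:
  fixes c :: "int \<Rightarrow> complex" and u :: "int \<Rightarrow> 'a \<Rightarrow> complex"
  assumes c: "(\<lambda>k. norm (c k)) summable_on UNIV"
    and u: "\<And>k. u k \<in> borel_measurable M" and bound: "\<And>k x. norm (u k x) \<le> B"
  shows "integrable M (\<lambda>x. \<Sum>\<^sub>\<infinity>k. c k * u k x)"
    and "(\<integral>x. (\<Sum>\<^sub>\<infinity>k. c k * u k x) \<partial>M) = (\<Sum>\<^sub>\<infinity>k. c k * integral\<^sup>L M (u k))"
proof -
  define f where "f i x = c (int_decode i) * u (int_decode i) x" for i x
  define K where "K = measure M (space M) * B"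
  have int_u: "integrable M (u k)" for k
    using u bound by (intro integrable_const_bound[where B=B]) auto
  have int_f: "integrable M (f i)" for i
    unfolding f_def using int_u by simp
  have f_sums: "(\<lambda>i. f i x) sums (\<Sum>\<^sub>\<infinity>k. c k * u k x)"
    and f_abs: "summable (\<lambda>i. norm (f i x))" for x
    using sums_int_decode_infsum[OF summable_on_norm_mult_bounded[OF c bound]] by (simp_all add: f_def)
  have int_norm_f: "integral\<^sup>L M (\<lambda>x. norm (f i x)) \<le> norm (c (int_decode i)) * K" for i
  proof -
    have "integral\<^sup>L M (\<lambda>x. norm (f i x)) \<le> (\<integral>x. norm (c (int_decode i)) * B \<partial>M)"
      using int_f[of i] bound unfolding f_def by (intro integral_mono integrable_norm) (auto simp: norm_mult mult_left_mono)
    then show ?thesis by (simp add: K_def mult_ac)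
  qed
  have "summable (\<lambda>i. integral\<^sup>L M (\<lambda>x. norm (f i x)))"
  proof (rule summable_comparison_test)
    show "\<exists>N. \<forall>i\<ge>N. norm (integral\<^sup>L M (\<lambda>x. norm (f i x))) \<le> norm (c (int_decode i)) * K"
      using int_norm_f by simp
    show "summable (\<lambda>i. norm (c (int_decode i)) * K)"
      using sums_int_decode_infsum(2)[of c] c by (intro summable_mult2) simp
  qed
  then have series: "integrable M (\<lambda>x. \<Sum>i. f i x)"
      "(\<integral>x. (\<Sum>i. f i x) \<partial>M) = (\<Sum>i. integral\<^sup>L M (f i))"
    using integrable_suminf[OF int_f] integral_suminf[OF int_f] f_abs by auto
  have series_eq: "(\<lambda>x. \<Sum>i. f i x) = (\<lambda>x. \<Sum>\<^sub>\<infinity>k. c k * u k x)"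
    using f_sums by (metis sums_unique)
  show "integrable M (\<lambda>x. \<Sum>\<^sub>\<infinity>k. c k * u k x)"
    using series(1) series_eq by simp
  have int_u_bound: "norm (integral\<^sup>L M (u k)) \<le> K" for k
  proof -
    have "norm (integral\<^sup>L M (u k)) \<le> (\<integral>x. norm (u k x) \<partial>M)"
      by (rule integral_norm_bound)
    also have "\<dots> \<le> (\<integral>x. B \<partial>M)"
      using int_u bound by (intro integral_mono) auto
    finally show ?thesis by (simp add: K_def)
  qed
  have "(\<lambda>i. integral\<^sup>L M (f i)) sums (\<Sum>\<^sub>\<infinity>k. c k * integral\<^sup>L M (u k))"
    using sums_int_decode_infsum(1)[OF summable_on_norm_mult_bounded[OF c int_u_bound]] by (simp add: f_def[abs_def])
  with series(2) series_eq
  show "(\<integral>x. (\<Sum>\<^sub>\<infinity>k. c k * u k x) \<partial>M) = (\<Sum>\<^sub>\<infinity>k. c k * integral\<^sup>L M (u k))"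
    using sums_unique by metis
qed

definition fourier_series :: "(int \<Rightarrow> complex) \<Rightarrow> real \<Rightarrow> complex" where
  "fourier_series c x = (\<Sum>\<^sub>\<infinity>k. c k * fourier_char k x)"

lemma continuous_on_fourier_series:
  assumes "(\<lambda>k. norm (c k)) summable_on UNIV"
  shows "continuous_on UNIV (fourier_series c)"
proof -
  have "uniform_limit UNIV (\<lambda>K x. \<Sum>k\<in>K. c k * fourier_char k x) (fourier_series c)
          (finite_subsets_at_top UNIV)"
    unfolding fourier_series_def
    by (rule Weierstrass_m_test_general[OF _ assms]) (simp add: norm_mult)
  then show ?thesis
    by (rule uniform_limit_theorem[rotated])
       (auto intro!: always_eventually continuous_intros continuous_on_fourier_char)
qed

lemma norm_fourier_series_le:
  assumes "(\<lambda>k. norm (c k)) summable_on UNIV"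
  shows "norm (fourier_series c x) \<le> (\<Sum>\<^sub>\<infinity>k. norm (c k))"
proof -
  have "(\<lambda>k. norm (c k * fourier_char k x)) summable_on UNIV"
    using assms by (simp add: norm_mult)
  from norm_infsum_bound[OF this] show ?thesis
    unfolding fourier_series_def by (simp add: norm_mult)
qed

lemma integral_fourier_series_mult:
  assumes c: "(\<lambda>k. norm (c k)) summable_on UNIV"
    and \<phi>: "\<phi> \<in> borel_measurable torus" and bound: "\<And>x. norm (\<phi> x) \<le> B"
  shows "integral\<^sup>L torus (\<lambda>x. fourier_series c x * \<phi> x)
           = (\<Sum>\<^sub>\<infinity>k. c k * integral\<^sup>L torus (\<lambda>x. fourier_char k x * \<phi> x))"
proof -
  interpret finite_measure torus
    by (rule finite_measure_lebesgue_on) simp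
  have "(\<lambda>x. fourier_series c x * \<phi> x) = (\<lambda>x. \<Sum>\<^sub>\<infinity>k. c k * (fourier_char k x * \<phi> x))"
    unfolding fourier_series_def by (simp add: infsum_cmult_left'[symmetric] mult.assoc)
  moreover have "(\<lambda>x. fourier_char k x * \<phi> x) \<in> borel_measurable torus" for k
    using borel_measurable_torus_continuous[OF continuous_on_fourier_char] \<phi> by measurable
  ultimately show ?thesis
    using integral_infsum_exchange(2)[OF c, of "\<lambda>k x. fourier_char k x * \<phi> x" B]
    by (simp add: norm_mult bound)
qed

lemma infsum_int_single:
  fixes a :: "'a::{comm_monoid_add, t2_space}"
  shows "(\<Sum>\<^sub>\<infinity>k::int. if k = n then a else 0) = a"
  using infsum_cong_neutral[of "{n}" UNIV "\<lambda>k. if k = n then a else 0"] by simp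

lemma fourier_coeff_fourier_series:
  assumes c: "(\<lambda>k. norm (c k)) summable_on UNIV"
  shows "fourier_coeff (fourier_series c) n = c n"
proof -
  have "integral\<^sup>L torus (\<lambda>x. fourier_series c x * fourier_char (-n) x)
          = (\<Sum>\<^sub>\<infinity>k. c k * integral\<^sup>L torus (\<lambda>x. fourier_char k x * fourier_char (-n) x))"
    by (rule integral_fourier_series_mult[OF c, where B=1])
       (auto intro: borel_measurable_torus_continuous continuous_on_fourier_char)
  also have "\<dots> = (\<Sum>\<^sub>\<infinity>k. if k = n then c n * (2*pi) else 0)"
    by (rule infsum_cong) (simp add: fourier_char_mult integral_fourier_char)
  also have "\<dots> = c n * (2*pi)"
    by (rule infsum_int_single)
  finally show ?thesis
    unfolding fourier_coeff_eq by (simp add: scaleR_conv_of_real)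
qed

lemma fourier_coeff_fourier_series_mult:
  assumes a: "(\<lambda>k. norm (a k)) summable_on UNIV" and b: "(\<lambda>k. norm (b k)) summable_on UNIV"
  shows "fourier_coeff (\<lambda>x. fourier_series a x * fourier_series b x) n = (\<Sum>\<^sub>\<infinity>j. a j * b (n - j))"
proof -
  have "integral\<^sup>L torus (\<lambda>x. fourier_series a x * fourier_series b x * fourier_char (-n) x)
      = integral\<^sup>L torus (\<lambda>x. fourier_series a x * (fourier_series b x * fourier_char (-n) x))"
    by (simp add: mult.assoc)
  also have "\<dots> = (\<Sum>\<^sub>\<infinity>j. a j *
      integral\<^sup>L torus (\<lambda>x. fourier_char j x * (fourier_series b x * fourier_char (-n) x)))"
    using norm_fourier_series_le[OF b]
      borel_measurable_torus_continuous[OF continuous_on_fourier_series[OF b]]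
      borel_measurable_torus_continuous[OF continuous_on_fourier_char]
    by (intro integral_fourier_series_mult[OF a]) (auto simp: norm_mult)
  also have "\<dots> = (\<Sum>\<^sub>\<infinity>j. a j * ((2*pi) * b (n - j)))"
  proof (rule infsum_cong)
    fix j
    have "integral\<^sup>L torus (\<lambda>x. fourier_char j x * (fourier_series b x * fourier_char (-n) x))
        = integral\<^sup>L torus (\<lambda>x. fourier_series b x * fourier_char (-(n-j)) x)"
      by (intro Bochner_Integration.integral_cong refl) (simp add: mult.left_commute fourier_char_mult)
    also have "\<dots> = (2*pi) * b (n - j)"
      using fourier_coeff_fourier_series[OF b, of "n - j"]
      unfolding fourier_coeff_eq by (simp add: scaleR_conv_of_real field_simps)
    finally show "a j * integral\<^sup>L torus (\<lambda>x. fourier_char j x * (fourier_series b x * fourier_char (-n) x))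
        = a j * ((2*pi) * b (n - j))" by simp
  qed
  also have "\<dots> = (2*pi) * (\<Sum>\<^sub>\<infinity>j. a j * b (n - j))"
    by (simp add: infsum_cmult_right'[symmetric] mult_ac)
  finally show ?thesis
    unfolding fourier_coeff_eq by (simp add: scaleR_conv_of_real)
qed

section \<open>Uniqueness of Fourier coefficients\<close>

lemma fourier_coeff_scale: "fourier_coeff (\<lambda>x. c * h x) n = c * fourier_coeff h n"
  unfolding fourier_coeff_eq by (simp add: mult.assoc)

lemma fourier_coeff_mult_char:
  "fourier_coeff (\<lambda>x. h x * fourier_char j x) n = fourier_coeff h (n - j)"
  unfolding fourier_coeff_eq by (simp add: mult.assoc fourier_char_mult)

lemma fourier_coeff_add:
  assumes "integrable torus g" "integrable torus h"
  shows "fourier_coeff (\<lambda>x. g x + h x) n = fourier_coeff g n + fourier_coeff h n"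
proof -
  have "integrable torus (\<lambda>x. g x * fourier_char (-n) x)" "integrable torus (\<lambda>x. h x * fourier_char (-n) x)"
    using assms by (auto intro: integrable_torus_mult_continuous continuous_on_fourier_char)
  then show ?thesis
    unfolding fourier_coeff_eq by (simp add: distrib_right scaleR_add_right)
qed

lemma fourier_coeff_diff:
  assumes "integrable torus g" "integrable torus h"
  shows "fourier_coeff (\<lambda>x. g x - h x) n = fourier_coeff g n - fourier_coeff h n"
proof -
  have "integrable torus (\<lambda>x. g x * fourier_char (-n) x)" "integrable torus (\<lambda>x. h x * fourier_char (-n) x)"
    using assms by (auto intro: integrable_torus_mult_continuous continuous_on_fourier_char)
  then show ?thesis
    unfolding fourier_coeff_eq by (simp add: left_diff_distrib scaleR_diff_right)
qed

lemma continuous_on_polynomial_cis: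
  assumes "real_polynomial_function p"
  shows "continuous_on UNIV (\<lambda>x. complex_of_real (p (cis x)))"
proof -
  have p: "continuous_on UNIV p"
    using assms by (simp add: continuous_on_polymonial_function real_polynomial_function_eq)
  show ?thesis
    by (intro continuous_intros continuous_on_compose2[OF p]) auto
qed

text \<open>Generalising over h makes the product case go through: absorb one factor into h.\<close>

lemma fourier_coeff_mult_polynomial_cis_eq_0:
  assumes "real_polynomial_function p" "integrable torus h" "\<And>n. fourier_coeff h n = 0"
  shows "fourier_coeff (\<lambda>x. h x * of_real (p (cis x))) n = 0"
  using assms
proof (induction arbitrary: h n)
  case (linear f)
  interpret bounded_linear f by fact
  define a where "a = complex_of_real (f 1) / 2"
  define b where "b = complex_of_real (f \<i>) / (2 * \<i>)"
  have f_cis: "of_real (f (cis x)) = (a + b) * fourier_char 1 x + (a - b) * fourier_char (-1) x" for x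
  proof -
    have "cis x = cos x *\<^sub>R 1 + sin x *\<^sub>R \<i>"
      by (simp add: complex_eq_iff)
    then have "f (cis x) = cos x * f 1 + sin x * f \<i>"
      by (simp only: add scale real_scaleR_def)
    then show ?thesis
      unfolding a_def b_def fourier_char_def
      by (simp add: cos_exp_eq sin_exp_eq cos_of_real[symmetric] sin_of_real[symmetric] field_simps)
  qed
  have "(\<lambda>x. h x * of_real (f (cis x)))
      = (\<lambda>x. h x * ((a + b) * fourier_char 1 x + (a - b) * fourier_char (-1) x))"
    by (simp only: f_cis)
  also have "\<dots> = (\<lambda>x. (a + b) * (h x * fourier_char 1 x) + (a - b) * (h x * fourier_char (-1) x))"
    by (simp add: algebra_simps)
  finally have "(\<lambda>x. h x * of_real (f (cis x)))
      = (\<lambda>x. (a + b) * (h x * fourier_char 1 x) + (a - b) * (h x * fourier_char (-1) x))" .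
  moreover have "integrable torus (\<lambda>x. c * (h x * fourier_char k x))" for c k
    using linear.prems(1) by (intro integrable_mult_right integrable_torus_mult_continuous continuous_on_fourier_char)
  ultimately show ?case
    using linear.prems by (simp add: fourier_coeff_add fourier_coeff_scale fourier_coeff_mult_char)
next
  case (const c)
  then show ?case
    using fourier_coeff_scale[of "of_real c" h] by (simp add: mult.commute)
next
  case (add p q)
  have "integrable torus (\<lambda>x. h x * of_real (p (cis x)))" "integrable torus (\<lambda>x. h x * of_real (q (cis x)))"
    using add.prems(1) add.hyps
    by (auto intro!: integrable_torus_mult_continuous continuous_on_polynomial_cis)
  then show ?case
    using add.IH add.prems by (simp add: distrib_left fourier_coeff_add)
next
  case (mult p q)
  define g where "g x = h x * of_real (p (cis x))" for x
  have "integrable torus g"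
    unfolding g_def using mult.prems(1) mult.hyps(1)
    by (intro integrable_torus_mult_continuous continuous_on_polynomial_cis)
  moreover have "fourier_coeff g m = 0" for m
    unfolding g_def using mult.IH(1) mult.prems by blast
  ultimately have "fourier_coeff (\<lambda>x. g x * of_real (q (cis x))) n = 0"
    by (rule mult.IH(2))
  then show ?case
    by (simp add: g_def mult.assoc)
qed

lemma integral_mult_polynomial_cis_eq_0:
  assumes "real_polynomial_function p" "integrable torus h" "\<And>n. fourier_coeff h n = 0"
  shows "integral\<^sup>L torus (\<lambda>x. h x * of_real (p (cis x))) = 0"
  using fourier_coeff_mult_polynomial_cis_eq_0[OF assms, of 0] by (simp add: fourier_coeff_eq)

lemma integral_mult_continuous_cis_eq_0:
  fixes \<psi> :: "complex \<Rightarrow> real"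
  assumes h: "integrable torus h" "\<And>n. fourier_coeff h n = 0" and \<psi>: "continuous_on UNIV \<psi>"
  shows "integral\<^sup>L torus (\<lambda>x. h x * of_real (\<psi> (cis x))) = 0"
proof -
  define C where "C = integral\<^sup>L torus (\<lambda>x. norm (h x))"
  have "C \<ge> 0" unfolding C_def by simp
  have "norm (integral\<^sup>L torus (\<lambda>x. h x * of_real (\<psi> (cis x)))) \<le> 0 + \<epsilon>" if "\<epsilon> > 0" for \<epsilon>
  proof -
    define e where "e = \<epsilon> / (C + 1)"
    have "e > 0" unfolding e_def using \<open>C \<ge> 0\<close> that by simp
    then obtain p where p: "real_polynomial_function p"
      and p_approx: "\<And>z. z \<in> sphere 0 1 \<Longrightarrow> \<bar>\<psi> z - p z\<bar> < e"
      using Stone_Weierstrass_real_polynomial_function[OF compact_sphere continuous_on_subset[OF \<psi>]]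
      by blast
    have int_\<psi>: "integrable torus (\<lambda>x. h x * of_real (\<psi> (cis x)))"
      by (intro integrable_torus_mult_continuous[OF h(1)] continuous_intros
            continuous_on_compose2[OF \<psi>]) auto
    have int_p: "integrable torus (\<lambda>x. h x * of_real (p (cis x)))"
      by (intro integrable_torus_mult_continuous[OF h(1)] continuous_on_polynomial_cis p)
    have "integral\<^sup>L torus (\<lambda>x. h x * of_real (\<psi> (cis x)))
        = integral\<^sup>L torus (\<lambda>x. h x * of_real (\<psi> (cis x)) - h x * of_real (p (cis x)))"
      using integral_mult_polynomial_cis_eq_0[OF p h] by (simp add: int_\<psi> int_p)
    also have "norm \<dots> \<le> integral\<^sup>L torus (\<lambda>x. e * norm (h x))"
    proof (rule order_trans[OF integral_norm_bound integral_mono])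
      show "integrable torus (\<lambda>x. norm (h x * of_real (\<psi> (cis x)) - h x * of_real (p (cis x))))"
        using int_\<psi> int_p by auto
      show "integrable torus (\<lambda>x. e * norm (h x))"
        using h(1) by auto
      fix x
      have "\<bar>\<psi> (cis x) - p (cis x)\<bar> \<le> e"
        using p_approx[of "cis x"] by simp
      then have "norm (h x) * \<bar>\<psi> (cis x) - p (cis x)\<bar> \<le> e * norm (h x)"
        by (metis mult.commute mult_left_mono norm_ge_zero)
      then show "norm (h x * of_real (\<psi> (cis x)) - h x * of_real (p (cis x))) \<le> e * norm (h x)"
        by (simp add: right_diff_distrib[symmetric] norm_mult of_real_diff[symmetric] del: of_real_diff)
    qed
    also have "\<dots> = e * C"
      unfolding C_def by simp
    also have "\<dots> \<le> \<epsilon>"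
      using \<open>C \<ge> 0\<close> that by (simp add: e_def field_simps)
    finally show ?thesis by simp
  qed
  then show ?thesis
    using field_le_epsilon[of "norm (integral\<^sup>L torus (\<lambda>x. h x * of_real (\<psi> (cis x))))" 0] by simp
qed

lemma negligible_Inter_diff_Union:
  fixes A :: "'a::euclidean_space set"
  assumes "\<And>m. T m \<subseteq> A" "\<And>m. A \<subseteq> U m"
    and "\<And>m. U m - A \<in> lmeasurable" "\<And>m. measure lebesgue (U m - A) < 1 / Suc m"
    and "\<And>m. A - T m \<in> lmeasurable" "\<And>m. measure lebesgue (A - T m) < 1 / Suc m"
  shows "negligible ((\<Inter>m. U m) - (\<Union>m. T m))"
  unfolding negligible_outer
proof (intro allI impI)
  fix e :: real
  assume "e > 0"
  obtain m :: nat where "2 / e < real m"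
    using reals_Archimedean2 by blast
  then have m: "2 / e < real (Suc m)"
    by simp
  define S where "S = (U m - A) \<union> (A - T m)"
  have "(\<Inter>m. U m) - (\<Union>m. T m) \<subseteq> S"
    unfolding S_def by blast
  moreover have "S \<in> lmeasurable"
    unfolding S_def using assms by (intro fmeasurable.Un)
  moreover have "measure lebesgue S < e"
  proof -
    have "measure lebesgue S \<le> measure lebesgue (U m - A) + measure lebesgue (A - T m)"
      unfolding S_def using assms by (intro measure_Un_le) auto
    also have "\<dots> < 1 / Suc m + 1 / Suc m"
      using assms by (intro add_strict_mono)
    also have "\<dots> < e"
      using m \<open>e > 0\<close> by (simp add: field_simps)
    finally show ?thesis .
  qed
  ultimately show "\<exists>S. (\<Inter>m. U m) - (\<Union>m. T m) \<subseteq> S \<and> S \<in> lmeasurable \<and> measure lebesgue S < e"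
    by blast
qed

lemma lebesgue_closed_open_sandwich:
  fixes A :: "'a::euclidean_space set"
  assumes "A \<in> sets lebesgue"
  obtains T U :: "nat \<Rightarrow> 'a set"
  where "\<And>m. closed (T m)" "\<And>m. open (U m)" "\<And>m. T m \<subseteq> A" "\<And>m. A \<subseteq> U m"
    "incseq T" "decseq U" "negligible ((\<Inter>m. U m) - (\<Union>m. T m))"
proof -
  have measure_less: "measure lebesgue S < 1 / Suc m"
    if "S \<in> lmeasurable" "emeasure lebesgue S < ennreal (1 / Suc m)" for S m
    using that by (simp add: emeasure_eq_measure2 ennreal_less_iff)
  have "\<exists>T. closed T \<and> T \<subseteq> A \<and> A - T \<in> lmeasurable \<and> emeasure lebesgue (A - T) < ennreal (1 / Suc m)"
    for m :: nat
    by (rule sets_lebesgue_inner_closed[OF assms, of "1 / Suc m"]) auto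
  then obtain T0 where T0: "\<And>m. closed (T0 m)" "\<And>m. T0 m \<subseteq> A" "\<And>m. A - T0 m \<in> lmeasurable"
      "\<And>m. emeasure lebesgue (A - T0 m) < ennreal (1 / Suc m)"
    by metis
  have "\<exists>U. open U \<and> A \<subseteq> U \<and> U - A \<in> lmeasurable \<and> emeasure lebesgue (U - A) < ennreal (1 / Suc m)"
    for m :: nat
    by (rule sets_lebesgue_outer_open[OF assms, of "1 / Suc m"]) auto
  then obtain U0 where U0: "\<And>m. open (U0 m)" "\<And>m. A \<subseteq> U0 m" "\<And>m. U0 m - A \<in> lmeasurable"
      "\<And>m. emeasure lebesgue (U0 m - A) < ennreal (1 / Suc m)"
    by metis
  define T where "T m = (\<Union>j\<le>m. T0 j)" for m
  define U where "U m = (\<Inter>j\<le>m. U0 j)" for m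
  have "negligible ((\<Inter>m. U0 m) - (\<Union>m. T0 m))"
    using T0(2) U0(2) U0(3) measure_less[OF U0(3,4)] T0(3) measure_less[OF T0(3,4)]
    by (rule negligible_Inter_diff_Union)
  moreover have "(\<Inter>m. U m) - (\<Union>m. T m) = (\<Inter>m. U0 m) - (\<Union>m. T0 m)"
    unfolding T_def U_def by blast
  ultimately have gap: "negligible ((\<Inter>m. U m) - (\<Union>m. T m))"
    by simp
  have "closed (T m)" "open (U m)" for m
    unfolding T_def U_def using T0(1) U0(1) by (auto intro: closed_UN open_INT)
  moreover have "T m \<subseteq> A" "A \<subseteq> U m" for m
    unfolding T_def U_def using T0(2) U0(2) by blast+
  moreover have "incseq T" "decseq U"
    unfolding T_def U_def incseq_def decseq_def by force+
  ultimately show ?thesis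
    using gap
    by (rule that)
qed

lemma cis_eq_cis_imp_eq:
  assumes "cis t = cis y" "\<bar>t - y\<bar> < 2 * pi"
  shows "t = y"
  using assms by (intro rcong_imp_eq[where m = "2 * pi"]) (auto simp: cis_eq_iff)

lemma Urysohn_cis:
  assumes T: "closed T" "T \<subseteq> {0<..<2*pi}" and U: "open U" "T \<subseteq> U"
  obtains \<psi> :: "complex \<Rightarrow> real"
  where "continuous_on UNIV \<psi>" "\<And>z. \<psi> z \<in> {0..1}"
    "\<And>x. x \<in> T \<Longrightarrow> \<psi> (cis x) = 1" "\<And>x. x \<in> {0..2*pi} - U \<Longrightarrow> \<psi> (cis x) = 0"
proof -
  have "bounded T"
    using T(2) by (rule bounded_subset[rotated]) simp
  then have "compact T"
    using T(1) by (simp add: compact_eq_bounded_closed)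
  moreover have "compact ({0..2*pi} - U)"
    using U by (intro compact_diff) auto
  ultimately have closed: "closed (cis ` T)" "closed (cis ` ({0..2*pi} - U))"
    by (auto intro!: compact_imp_closed compact_continuous_image continuous_on_cis continuous_on_id)
  have "cis ` T \<inter> cis ` ({0..2*pi} - U) = {}"
  proof (rule ccontr)
    assume "cis ` T \<inter> cis ` ({0..2*pi} - U) \<noteq> {}"
    then obtain t y where "t \<in> T" "y \<in> {0..2*pi}" "y \<notin> U" "cis t = cis y"
      by blast
    moreover have "t \<in> {0<..<2*pi}"
      using \<open>t \<in> T\<close> T(2) by blast
    then have "\<bar>t - y\<bar> < 2 * pi"
      using \<open>y \<in> {0..2*pi}\<close> by auto
    ultimately show False
      using cis_eq_cis_imp_eq U(2) by blast
  qed
  from Urysohn[OF closed this, of 1 0] obtain \<psi> :: "complex \<Rightarrow> real"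
    where "continuous_on UNIV \<psi>" "\<And>z. \<psi> z \<in> closed_segment 1 0"
      "\<And>z. z \<in> cis ` T \<Longrightarrow> \<psi> z = 1" "\<And>z. z \<in> cis ` ({0..2*pi} - U) \<Longrightarrow> \<psi> z = 0"
    by metis
  moreover have "\<psi> z \<in> {0..1}" for z
    using \<open>\<And>z. \<psi> z \<in> closed_segment 1 0\<close>[of z] by (simp add: closed_segment_eq_real_ivl)
  ultimately show ?thesis
    using that[of \<psi>] by blast
qed

lemma tendsto_indicator_sandwich:
  fixes \<phi> :: "nat \<Rightarrow> real"
  assumes "incseq T" "decseq U" "\<And>m. T m \<subseteq> A" "\<And>m. A \<subseteq> U m"
    and "\<And>m. x \<in> T m \<Longrightarrow> \<phi> m = 1" "\<And>m. x \<notin> U m \<Longrightarrow> \<phi> m = 0"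
    and "x \<notin> (\<Inter>m. U m) - (\<Union>m. T m)"
  shows "\<phi> \<longlonglongrightarrow> indicator A x"
proof (cases "\<exists>m. x \<in> T m")
  case True
  then obtain m0 where "x \<in> T m0" ..
  then have "x \<in> A" and "\<forall>m\<ge>m0. \<phi> m = 1"
    using assms(3,5) incseqD[OF assms(1)] by blast+
  then show ?thesis
    by (intro tendsto_eventually) (auto simp: eventually_sequentially)
next
  case False
  with assms(7) obtain m0 where "x \<notin> U m0"
    by blast
  then have "x \<notin> A" and "\<forall>m\<ge>m0. \<phi> m = 0"
    using assms(4,6) decseqD[OF assms(2)] by blast+
  then show ?thesis
    by (intro tendsto_eventually) (auto simp: eventually_sequentially)
qed

text \<open>
  The endpoints 0 and 2 pi are discarded: cis identifies them, so no continuous function of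
  cis x separates them.
\<close>

lemma indicator_AE_limit_cis:
  assumes "A \<in> sets torus"
  obtains \<psi> :: "nat \<Rightarrow> complex \<Rightarrow> real"
  where "\<And>m. continuous_on UNIV (\<psi> m)" "\<And>m z. \<psi> m z \<in> {0..1}"
    "AE x in torus. (\<lambda>m. \<psi> m (cis x)) \<longlonglongrightarrow> indicator A x"
proof -
  define A' where "A' = A \<inter> {0<..<2*pi}"
  have "A' \<in> sets lebesgue"
    using assms by (auto simp: A'_def sets_restrict_space_iff)
  then obtain T U where T: "\<And>m. closed (T m)" "\<And>m. T m \<subseteq> A'" "incseq T"
    and U: "\<And>m. open (U m)" "\<And>m. A' \<subseteq> U m" "decseq U"
    and gap: "negligible ((\<Inter>m. U m) - (\<Union>m. T m))"
    by (rule lebesgue_closed_open_sandwich) blast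
  define V where "V m = U m \<inter> {0<..<2*pi}" for m
  have "\<exists>\<psi> :: complex \<Rightarrow> real. continuous_on UNIV \<psi> \<and> (\<forall>z. \<psi> z \<in> {0..1}) \<and> (\<forall>x\<in>T m. \<psi> (cis x) = 1)
          \<and> (\<forall>x\<in>{0..2*pi} - V m. \<psi> (cis x) = 0)" for m
  proof -
    have "T m \<subseteq> {0<..<2*pi}" "open (V m)" "T m \<subseteq> V m"
      using T(2) U(1,2) by (auto simp: A'_def V_def) blast
    with T(1)[of m] obtain \<psi> :: "complex \<Rightarrow> real" where "continuous_on UNIV \<psi>" "\<And>z. \<psi> z \<in> {0..1}"
      "\<And>x. x \<in> T m \<Longrightarrow> \<psi> (cis x) = 1" "\<And>x. x \<in> {0..2*pi} - V m \<Longrightarrow> \<psi> (cis x) = 0"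
      by (rule Urysohn_cis) blast
    then show ?thesis
      by blast
  qed
  then obtain \<psi> :: "nat \<Rightarrow> complex \<Rightarrow> real" where \<psi>: "\<And>m. continuous_on UNIV (\<psi> m)" "\<And>m z. \<psi> m z \<in> {0..1}"
    and \<psi>_T: "\<And>m x. x \<in> T m \<Longrightarrow> \<psi> m (cis x) = 1"
    and \<psi>_V: "\<And>m x. x \<in> {0..2*pi} - V m \<Longrightarrow> \<psi> m (cis x) = 0"
    by metis
  define Z where "Z = ((\<Inter>m. U m) - (\<Union>m. T m)) \<union> {0, 2*pi}"
  have "AE x in torus. x \<notin> Z"
  proof (rule AE_I')
    have "negligible Z"
      unfolding Z_def using gap by simp
    then have "negligible (Z \<inter> {0..2*pi})"
      by (rule negligible_subset) auto
    then show "Z \<inter> {0..2*pi} \<in> null_sets torus"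
      by (auto simp: null_sets_restrict_space negligible_iff_null_sets)
  qed auto
  moreover have "(\<lambda>m. \<psi> m (cis x)) \<longlonglongrightarrow> indicator A x" if "x \<in> {0..2*pi}" "x \<notin> Z" for x
  proof -
    have "x \<in> {0<..<2*pi}"
      using that by (auto simp: Z_def)
    then have "indicator A x = (indicator A' x :: real)"
      by (simp add: A'_def indicator_def)
    moreover have "decseq V"
      using U(3) by (auto simp: V_def decseq_def)
    then have "(\<lambda>m. \<psi> m (cis x)) \<longlonglongrightarrow> indicator A' x"
      using T(2,3) U(2) \<psi>_T \<psi>_V that \<open>x \<in> {0<..<2*pi}\<close>
      by (intro tendsto_indicator_sandwich[where T = T and U = V]) (auto simp: V_def A'_def Z_def)
    ultimately show ?thesis
      by simp
  qed
  then have "AE x in torus. x \<notin> Z \<longrightarrow> (\<lambda>m. \<psi> m (cis x)) \<longlonglongrightarrow> indicator A x"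
    by (intro AE_I2) simp
  ultimately have "AE x in torus. (\<lambda>m. \<psi> m (cis x)) \<longlonglongrightarrow> indicator A x"
    by (rule AE_mp)
  then show ?thesis
    by (rule that[OF \<psi>])
qed

lemma set_integral_eq_0_if_fourier_coeff_eq_0:
  assumes h: "integrable torus h" "\<And>n. fourier_coeff h n = 0" and A: "A \<in> sets torus"
  shows "set_lebesgue_integral torus A h = 0"
proof -
  obtain \<psi> :: "nat \<Rightarrow> complex \<Rightarrow> real" where \<psi>: "\<And>m. continuous_on UNIV (\<psi> m)" "\<And>m z. \<psi> m z \<in> {0..1}"
    and lim: "AE x in torus. (\<lambda>m. \<psi> m (cis x)) \<longlonglongrightarrow> indicator A x"
    using indicator_AE_limit_cis[OF A] by blast
  have cont: "continuous_on UNIV (\<lambda>x. complex_of_real (\<psi> m (cis x)))" for m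
    by (intro continuous_intros continuous_on_compose2[OF \<psi>(1)]) auto
  have "(\<lambda>m. integral\<^sup>L torus (\<lambda>x. h x * of_real (\<psi> m (cis x))))
          \<longlonglongrightarrow> integral\<^sup>L torus (\<lambda>x. indicator A x *\<^sub>R h x)"
  proof (rule integral_dominated_convergence[OF _ _ integrable_norm[OF h(1)]])
    show "(\<lambda>x. indicator A x *\<^sub>R h x) \<in> borel_measurable torus"
      using integrable_mult_indicator[OF A h(1)] by (rule borel_measurable_integrable)
    show "(\<lambda>x. h x * of_real (\<psi> m (cis x))) \<in> borel_measurable torus" for m
      using integrable_torus_mult_continuous[OF h(1) cont] by (rule borel_measurable_integrable)
    show "AE x in torus. norm (h x * of_real (\<psi> m (cis x))) \<le> norm (h x)" for m
      using \<psi>(2)[of m] by (intro AE_I2) (simp add: norm_mult mult_left_le)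
    show "AE x in torus. (\<lambda>m. h x * of_real (\<psi> m (cis x))) \<longlonglongrightarrow> indicator A x *\<^sub>R h x"
      using lim by eventually_elim (auto intro!: tendsto_eq_intros simp: indicator_def)
  qed
  then show ?thesis
    using integral_mult_continuous_cis_eq_0[OF h \<psi>(1)]
    by (simp add: set_lebesgue_integral_def LIMSEQ_const_iff)
qed

lemma AE_zero_if_fourier_coeff_eq_0:
  assumes "integrable torus h" "\<And>n. fourier_coeff h n = 0"
  shows "AE x in torus. h x = 0"
proof -
  interpret finite_measure torus
    by (rule finite_measure_lebesgue_on) simp
  show ?thesis
    using assms by (intro density_zero set_integral_eq_0_if_fourier_coeff_eq_0)
qed

lemma fourier_coeff_cong_AE:
  assumes "g \<in> borel_measurable torus" "h \<in> borel_measurable torus" "AE x in torus. g x = h x"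
  shows "fourier_coeff g n = fourier_coeff h n"
proof -
  have "integral\<^sup>L torus (\<lambda>x. g x * fourier_char (-n) x) = integral\<^sup>L torus (\<lambda>x. h x * fourier_char (-n) x)"
    using assms borel_measurable_torus_continuous[OF continuous_on_fourier_char]
    by (intro integral_cong_AE) (auto elim!: AE_mp)
  then show ?thesis
    unfolding fourier_coeff_eq by simp
qed

lemma AE_eq_fourier_series:
  assumes g: "integrable torus g" and c: "(\<lambda>k. norm (fourier_coeff g k)) summable_on UNIV"
  shows "AE x in torus. g x = fourier_series (fourier_coeff g) x"
proof -
  have int_series: "integrable torus (fourier_series (fourier_coeff g))"
    by (rule integrable_torus_continuous[OF continuous_on_fourier_series[OF c]])
  have "AE x in torus. g x - fourier_series (fourier_coeff g) x = 0"
  proof (rule AE_zero_if_fourier_coeff_eq_0)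
    show "integrable torus (\<lambda>x. g x - fourier_series (fourier_coeff g) x)"
      using g int_series by simp
    show "fourier_coeff (\<lambda>x. g x - fourier_series (fourier_coeff g) x) n = 0" for n
      using g int_series by (simp add: fourier_coeff_diff fourier_coeff_fourier_series[OF c])
  qed
  then show ?thesis
    by simp
qed

lemma fourier_coeff_mult:
  assumes g: "L1T g" and f: "L1T f"
    and a: "(\<lambda>k. norm (fourier_coeff g k)) summable_on UNIV"
    and b: "(\<lambda>k. norm (fourier_coeff f k)) summable_on UNIV"
  shows "L1T (\<lambda>x. g x * f x)"
    and "fourier_coeff (\<lambda>x. g x * f x) n = (\<Sum>\<^sub>\<infinity>j. fourier_coeff g j * fourier_coeff f (n - j))"
proof -
  define F where "F x = fourier_series (fourier_coeff g) x * fourier_series (fourier_coeff f) x" for x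
  have "integrable torus g" "integrable torus f"
    using g f by (simp_all add: L1T_def)
  then have AE_F: "AE x in torus. g x * f x = F x"
    and meas: "(\<lambda>x. g x * f x) \<in> borel_measurable torus"
    using AE_eq_fourier_series[OF _ a] AE_eq_fourier_series[OF _ b] by (auto simp: F_def)
  have "continuous_on UNIV F"
    unfolding F_def by (intro continuous_intros continuous_on_fourier_series a b)
  then have meas_F: "F \<in> borel_measurable torus" and "integrable torus F"
    by (simp_all add: borel_measurable_torus_continuous integrable_torus_continuous)
  then have "integrable torus (\<lambda>x. g x * f x)"
    using integrable_cong_AE[OF meas meas_F AE_F] by simp
  then show "L1T (\<lambda>x. g x * f x)"
    using g f by (simp add: L1T_def)
  have "fourier_coeff (\<lambda>x. g x * f x) n = fourier_coeff F n"
    by (rule fourier_coeff_cong_AE[OF meas meas_F AE_F])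
  also have "\<dots> = (\<Sum>\<^sub>\<infinity>j. fourier_coeff g j * fourier_coeff f (n - j))"
    unfolding F_def by (rule fourier_coeff_fourier_series_mult[OF a b])
  finally show "fourier_coeff (\<lambda>x. g x * f x) n = (\<Sum>\<^sub>\<infinity>j. fourier_coeff g j * fourier_coeff f (n - j))" .
qed

section \<open>Weighted convolution estimates\<close>

lemma has_sum_product:
  fixes u :: "'a \<Rightarrow> real" and v :: "'b \<Rightarrow> real"
  assumes "\<And>j. 0 \<le> u j" "\<And>l. 0 \<le> v l" "u summable_on A" "v summable_on B"
  shows "((\<lambda>(j, l). u j * v l) has_sum (infsum u A * infsum v B)) (A \<times> B)"
proof -
  have inner: "((\<lambda>l. (\<lambda>(j, l). u j * v l) (j, l)) has_sum (u j * infsum v B)) B" for j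
    using has_sum_cmult_right[OF has_sum_infsum[OF assms(4)]] by simp
  have outer: "((\<lambda>j. u j * infsum v B) has_sum (infsum u A * infsum v B)) A"
    by (rule has_sum_cmult_left[OF has_sum_infsum[OF assms(3)]])
  have "(\<lambda>(j, l). u j * v l) summable_on Sigma A (\<lambda>_. B)"
    using assms(1,2) by (intro summable_on_SigmaI[OF inner has_sum_imp_summable[OF outer]]) auto
  then show ?thesis
    using has_sum_SigmaI[OF inner outer] by simp
qed

lemma weighted_convolution_le:
  fixes a b :: "int \<Rightarrow> 'a::{banach, real_normed_div_algebra}" and W :: "int \<Rightarrow> real"
  assumes W: "\<And>k. 0 < W k"
    and dominated: "\<And>j l. W (j + l) * norm (a j) * norm (b l) \<le> p (j, l)"
    and p: "(p has_sum P) UNIV"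
  shows "(\<lambda>k. W k * norm (\<Sum>\<^sub>\<infinity>j. a j * b (k - j))) summable_on UNIV"
    and "(\<Sum>\<^sub>\<infinity>k. W k * norm (\<Sum>\<^sub>\<infinity>j. a j * b (k - j))) \<le> P"
proof -
  define q where "q = (\<lambda>(j, l). W (j + l) * norm (a j) * norm (b l))"
  define r where "r k j = W k * norm (a j) * norm (b (k - j))" for k j
  have "q x \<le> p x" "0 \<le> q x" for x
    using dominated[of "fst x" "snd x"] W[of "fst x + snd x"] by (auto simp: q_def case_prod_beta)
  then have q: "q summable_on UNIV" "infsum q UNIV \<le> P"
    using summable_on_comparison_test[OF has_sum_imp_summable[OF p]]
      infsum_mono[of q UNIV p] has_sum_imp_summable[OF p] infsumI[OF p] by auto
  define \<sigma> where "\<sigma> = (\<lambda>(k::int, j::int). (j, k - j))"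
  have \<sigma>: "bij_betw \<sigma> UNIV UNIV"
    by (rule bij_betwI[where g = "\<lambda>(j, l). (j + l, j)"]) (auto simp: \<sigma>_def)
  have r_q: "(\<lambda>(k, j). r k j) = q \<circ> \<sigma>"
    by (auto simp: r_def q_def \<sigma>_def fun_eq_iff)
  have r: "(\<lambda>(k, j). r k j) summable_on UNIV \<times> UNIV"
    unfolding r_q using summable_on_reindex_bij_betw[OF \<sigma>, of q] q(1) by (simp add: comp_def)
  have R: "(\<lambda>k. \<Sum>\<^sub>\<infinity>j. r k j) summable_on UNIV"
    using summable_on_Sigma_banach[OF r] .
  have R_sum: "(\<Sum>\<^sub>\<infinity>k. \<Sum>\<^sub>\<infinity>j. r k j) = infsum q UNIV"
    using infsum_Sigma'_banach[OF r] infsum_reindex_bij_betw[OF \<sigma>, of q] r_q by (simp add: comp_def)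
  have bound: "W k * norm (\<Sum>\<^sub>\<infinity>j. a j * b (k - j)) \<le> (\<Sum>\<^sub>\<infinity>j. r k j)" for k
  proof -
    have "r k summable_on UNIV"
      using summable_on_SigmaD1[OF r] by simp
    then have "(\<lambda>j. inverse (W k) * r k j) summable_on UNIV"
      by (rule summable_on_cmult_right)
    moreover have "(\<lambda>j. inverse (W k) * r k j) = (\<lambda>j. norm (a j * b (k - j)))"
      using W[of k] by (auto simp: r_def fun_eq_iff norm_mult)
    ultimately have abs: "(\<lambda>j. norm (a j * b (k - j))) summable_on UNIV"
      by simp
    have "norm (\<Sum>\<^sub>\<infinity>j. a j * b (k - j)) \<le> (\<Sum>\<^sub>\<infinity>j. norm (a j * b (k - j)))"
      by (rule norm_infsum_bound[OF abs])
    then have "W k * norm (\<Sum>\<^sub>\<infinity>j. a j * b (k - j)) \<le> W k * (\<Sum>\<^sub>\<infinity>j. norm (a j * b (k - j)))"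
      using W[of k] by simp
    also have "\<dots> = (\<Sum>\<^sub>\<infinity>j. r k j)"
      by (simp add: r_def infsum_cmult_right' norm_mult mult.assoc)
    finally show ?thesis .
  qed
  show summable: "(\<lambda>k. W k * norm (\<Sum>\<^sub>\<infinity>j. a j * b (k - j))) summable_on UNIV"
    using W by (intro summable_on_comparison_test[OF R bound]) (simp add: less_imp_le)
  have "(\<Sum>\<^sub>\<infinity>k. W k * norm (\<Sum>\<^sub>\<infinity>j. a j * b (k - j))) \<le> (\<Sum>\<^sub>\<infinity>k. \<Sum>\<^sub>\<infinity>j. r k j)"
    by (rule infsum_mono[OF summable R bound])
  then show "(\<Sum>\<^sub>\<infinity>k. W k * norm (\<Sum>\<^sub>\<infinity>j. a j * b (k - j))) \<le> P"
    using R_sum q(2) by simp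
qed

section \<open>Products and powers in Wiener spaces\<close>

definition powr_sum_const :: "real \<Rightarrow> real" where
  "powr_sum_const s = (if s \<le> 1 then 1 else K_s s)"

lemma powr_sum_const_ge_1: "1 \<le> powr_sum_const s"
  unfolding powr_sum_const_def K_s_def by (auto intro: ge_one_powr_ge_zero)

lemma powr_add_le:
  fixes x y s :: real
  assumes x: "x > 0" and y: "y > 0" and s: "s \<ge> 0"
  shows "(x + y) powr s \<le> powr_sum_const s * (x powr s + y powr s)"
proof (cases "s \<le> 1")
  case True
  have "(x + y) powr s = x * (x + y) powr (s - 1) + y * (x + y) powr (s - 1)"
    using powr_add[of "x + y" 1 "s - 1"] x y by (simp add: algebra_simps)
  also have "\<dots> \<le> x * x powr (s - 1) + y * y powr (s - 1)"
    using True x y by (intro add_mono mult_left_mono powr_mono2') auto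
  also have "\<dots> = x powr s + y powr s"
    using powr_add[of x 1 "s - 1"] powr_add[of y 1 "s - 1"] x y by simp
  finally show ?thesis
    using True by (simp add: powr_sum_const_def)
next
  case False
  have "convex_on {0<..} (\<lambda>x. x powr s)"
    using False by (intro powr_convex) simp
  then have "((1 - 1/2) *\<^sub>R x + (1/2) *\<^sub>R y) powr s \<le> (1 - 1/2) * x powr s + (1/2) * y powr s"
    using x y by (intro convex_onD) auto
  then have "(x + y) powr s / 2 powr s \<le> (x powr s + y powr s) / 2"
    by (simp add: field_simps powr_divide)
  then have "(x + y) powr s \<le> 2 powr s / 2 * (x powr s + y powr s)"
    by (simp add: field_simps)
  then show ?thesis
    using False by (simp add: powr_sum_const_def K_s_def powr_diff)
qed

lemma wiener_weight_ge_1: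
  assumes "0 \<le> s" "0 \<le> lam"
  shows "1 \<le> wiener_weight s lam n"
proof -
  have "1 * 1 \<le> (1 + real_of_int \<bar>n\<bar>) powr s * exp (lam * real_of_int \<bar>n\<bar>)"
    using assms by (intro mult_mono ge_one_powr_ge_zero) auto
  then show ?thesis
    unfolding wiener_weight_def by simp
qed

lemma wiener_weight_mono: "0 \<le> s \<Longrightarrow> wiener_weight 0 lam n \<le> wiener_weight s lam n"
  unfolding wiener_weight_def by (auto intro!: mult_right_mono ge_one_powr_ge_zero)

lemma wiener_weight_0: "wiener_weight 0 lam n = exp (lam * \<bar>n\<bar>)"
  unfolding wiener_weight_def by simp

lemma wiener_weight_0_add_le:
  assumes "0 \<le> lam"
  shows "wiener_weight 0 lam (j + l) \<le> wiener_weight 0 lam j * wiener_weight 0 lam l"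
proof -
  have "lam * \<bar>j + l\<bar> \<le> lam * \<bar>j\<bar> + lam * \<bar>l\<bar>"
    using mult_left_mono[OF abs_triangle_ineq[of "real_of_int j" "real_of_int l"] assms]
    by (simp add: distrib_left)
  then show ?thesis
    by (simp add: wiener_weight_0 exp_add[symmetric])
qed

lemma wiener_weight_add_le:
  assumes s: "0 \<le> s" and lam: "0 \<le> lam"
  shows "wiener_weight s lam (j + l) \<le> powr_sum_const s *
           (wiener_weight s lam j * wiener_weight 0 lam l + wiener_weight 0 lam j * wiener_weight s lam l)"
proof -
  define x where "x = 1 + real_of_int \<bar>j\<bar>"
  define y where "y = 1 + real_of_int \<bar>l\<bar>"
  have "x > 0" "y > 0"
    unfolding x_def y_def by auto
  have "(1 + real_of_int \<bar>j + l\<bar>) powr s \<le> (x + y) powr s"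
    using s by (intro powr_mono2) (auto simp: x_def y_def)
  also have "\<dots> \<le> powr_sum_const s * (x powr s + y powr s)"
    by (rule powr_add_le[OF \<open>x > 0\<close> \<open>y > 0\<close> s])
  finally have P: "(1 + real_of_int \<bar>j + l\<bar>) powr s \<le> powr_sum_const s * (x powr s + y powr s)" .
  have E: "exp (lam * \<bar>j + l\<bar>) \<le> wiener_weight 0 lam j * wiener_weight 0 lam l"
    using wiener_weight_0_add_le[OF lam, of j l] by (simp add: wiener_weight_0)
  have "wiener_weight s lam (j + l)
      \<le> (powr_sum_const s * (x powr s + y powr s)) * (wiener_weight 0 lam j * wiener_weight 0 lam l)"
    unfolding wiener_weight_def[of s lam "j + l"] using powr_sum_const_ge_1[of s]
    by (intro mult_mono[OF P E]) auto
  also have "\<dots> = powr_sum_const s * ((x powr s * wiener_weight 0 lam j) * wiener_weight 0 lam l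
      + wiener_weight 0 lam j * (y powr s * wiener_weight 0 lam l))"
    by (simp add: algebra_simps)
  also have "\<dots> = powr_sum_const s *
      (wiener_weight s lam j * wiener_weight 0 lam l + wiener_weight 0 lam j * wiener_weight s lam l)"
    by (simp add: wiener_weight_def[of s] wiener_weight_0 x_def y_def)
  finally show ?thesis .
qed

lemma wiener_space_subset_0:
  assumes "0 \<le> s" "0 \<le> lam"
  shows "wiener_space s lam \<subseteq> wiener_space 0 lam"
proof
  fix f assume f: "f \<in> wiener_space s lam"
  have "(\<lambda>n. wiener_weight 0 lam n * norm (fourier_coeff f n)) summable_on UNIV"
  proof (rule summable_on_comparison_test)
    show "(\<lambda>n. wiener_weight s lam n * norm (fourier_coeff f n)) summable_on UNIV"
      using f by (simp add: wiener_space_def)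
    show "wiener_weight 0 lam n * norm (fourier_coeff f n) \<le> wiener_weight s lam n * norm (fourier_coeff f n)" for n
      using assms(1) by (intro mult_right_mono wiener_weight_mono) auto
    show "0 \<le> wiener_weight 0 lam n * norm (fourier_coeff f n)" for n
      using wiener_weight_ge_1[OF order_refl assms(2), of n] by simp
  qed
  then show "f \<in> wiener_space 0 lam"
    using f by (simp add: wiener_space_def)
qed

lemma summable_norm_fourier_coeff:
  assumes "f \<in> wiener_space s lam" "0 \<le> s" "0 \<le> lam"
  shows "(\<lambda>n. norm (fourier_coeff f n)) summable_on UNIV"
proof (rule summable_on_comparison_test)
  show "(\<lambda>n. wiener_weight s lam n * norm (fourier_coeff f n)) summable_on UNIV"
    using assms(1) by (simp add: wiener_space_def)
  show "norm (fourier_coeff f n) \<le> wiener_weight s lam n * norm (fourier_coeff f n)" for n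
    using mult_right_mono[OF wiener_weight_ge_1[OF assms(2,3)] norm_ge_zero] by simp
qed simp

lemma wiener_norm_nonneg:
  assumes "0 \<le> s" "0 \<le> lam"
  shows "0 \<le> wiener_norm s lam f"
  unfolding wiener_norm_def using wiener_weight_ge_1[OF assms]
  by (intro infsum_nonneg) (simp add: order_trans[OF zero_le_one])

lemma wiener_space_mult_dominated:
  assumes s: "0 \<le> s" and lam: "0 \<le> lam" and g: "g \<in> wiener_space 0 lam" and f: "f \<in> wiener_space 0 lam"
    and dominated: "\<And>j l. wiener_weight s lam (j + l) * norm (fourier_coeff g j) * norm (fourier_coeff f l)
                      \<le> p (j, l)"
    and "(p has_sum P) UNIV"
  shows "(\<lambda>x. g x * f x) \<in> wiener_space s lam" and "wiener_norm s lam (\<lambda>x. g x * f x) \<le> P"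
proof -
  have L1T: "L1T g" "L1T f"
    using g f by (simp_all add: wiener_space_def)
  have abs: "(\<lambda>n. norm (fourier_coeff g n)) summable_on UNIV" "(\<lambda>n. norm (fourier_coeff f n)) summable_on UNIV"
    using summable_norm_fourier_coeff[OF g order_refl lam] summable_norm_fourier_coeff[OF f order_refl lam] .
  note coeff = fourier_coeff_mult[OF L1T abs]
  note conv = weighted_convolution_le[of "wiener_weight s lam", OF _ dominated \<open>(p has_sum P) UNIV\<close>]
  have W: "0 < wiener_weight s lam k" for k
    using wiener_weight_ge_1[OF s lam] by (rule less_le_trans[OF zero_less_one])
  show "(\<lambda>x. g x * f x) \<in> wiener_space s lam"
    using coeff conv(1)[OF W] by (simp add: wiener_space_def)
  show "wiener_norm s lam (\<lambda>x. g x * f x) \<le> P"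
    using coeff conv(2)[OF W] by (simp add: wiener_norm_def)
qed

lemma has_sum_wiener_norm_product:
  assumes "g \<in> wiener_space t1 lam" "f \<in> wiener_space t2 lam" "0 \<le> t1" "0 \<le> t2" "0 \<le> lam"
  shows "((\<lambda>(j, l). (wiener_weight t1 lam j * norm (fourier_coeff g j)) *
            (wiener_weight t2 lam l * norm (fourier_coeff f l))) has_sum
           (wiener_norm t1 lam g * wiener_norm t2 lam f)) UNIV"
proof -
  have "0 \<le> wiener_weight t lam n * norm (fourier_coeff h n)" if "0 \<le> t" for t h n
    using wiener_weight_ge_1[OF that \<open>0 \<le> lam\<close>, of n] by simp
  then have "((\<lambda>(j, l). (wiener_weight t1 lam j * norm (fourier_coeff g j)) *
            (wiener_weight t2 lam l * norm (fourier_coeff f l))) has_sum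
           (wiener_norm t1 lam g * wiener_norm t2 lam f)) (UNIV \<times> UNIV)"
    using assms unfolding wiener_norm_def wiener_space_def
    by (intro has_sum_product) auto
  then show ?thesis
    by simp
qed

lemma wiener_norm_0_mult_le:
  assumes lam: "0 \<le> lam" and g: "g \<in> wiener_space 0 lam" and f: "f \<in> wiener_space 0 lam"
  shows "(\<lambda>x. g x * f x) \<in> wiener_space 0 lam"
    and "wiener_norm 0 lam (\<lambda>x. g x * f x) \<le> wiener_norm 0 lam g * wiener_norm 0 lam f"
proof -
  let ?u = "\<lambda>h n. wiener_weight 0 lam n * norm (fourier_coeff h n)"
  have sum: "((\<lambda>(j, l). ?u g j * ?u f l) has_sum (wiener_norm 0 lam g * wiener_norm 0 lam f)) UNIV"
    using has_sum_wiener_norm_product[OF g f order_refl order_refl lam] .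
  have dominated: "wiener_weight 0 lam (j + l) * norm (fourier_coeff g j) * norm (fourier_coeff f l)
      \<le> ?u g j * ?u f l" for j l
    using mult_right_mono[OF wiener_weight_0_add_le[OF lam, of j l],
        of "norm (fourier_coeff g j) * norm (fourier_coeff f l)"]
    by (simp add: algebra_simps)
  show "(\<lambda>x. g x * f x) \<in> wiener_space 0 lam"
    and "wiener_norm 0 lam (\<lambda>x. g x * f x) \<le> wiener_norm 0 lam g * wiener_norm 0 lam f"
    using wiener_space_mult_dominated[OF order_refl lam g f _ sum] dominated by simp_all
qed

lemma wiener_norm_mult_le:
  assumes s: "0 \<le> s" and lam: "0 \<le> lam" and g: "g \<in> wiener_space s lam" and f: "f \<in> wiener_space s lam"
  shows "(\<lambda>x. g x * f x) \<in> wiener_space s lam"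
    and "wiener_norm s lam (\<lambda>x. g x * f x)
           \<le> powr_sum_const s * (wiener_norm s lam g * wiener_norm 0 lam f + wiener_norm 0 lam g * wiener_norm s lam f)"
proof -
  let ?u = "\<lambda>t h n. wiener_weight t lam n * norm (fourier_coeff h n)"
  have g0: "g \<in> wiener_space 0 lam" and f0: "f \<in> wiener_space 0 lam"
    using g f wiener_space_subset_0[OF s lam] by auto
  have sum: "((\<lambda>(j, l). powr_sum_const s * (?u s g j * ?u 0 f l + ?u 0 g j * ?u s f l)) has_sum
      powr_sum_const s * (wiener_norm s lam g * wiener_norm 0 lam f + wiener_norm 0 lam g * wiener_norm s lam f)) UNIV"
    using has_sum_cmult_right[OF has_sum_add[OF has_sum_wiener_norm_product[OF g f0 s order_refl lam]
        has_sum_wiener_norm_product[OF g0 f order_refl s lam]], of "powr_sum_const s"]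
    by (simp add: split_def)
  have dominated: "wiener_weight s lam (j + l) * norm (fourier_coeff g j) * norm (fourier_coeff f l)
      \<le> powr_sum_const s * (?u s g j * ?u 0 f l + ?u 0 g j * ?u s f l)" for j l
    using mult_right_mono[OF wiener_weight_add_le[OF s lam, of j l],
        of "norm (fourier_coeff g j) * norm (fourier_coeff f l)"]
    by (simp add: algebra_simps)
  show "(\<lambda>x. g x * f x) \<in> wiener_space s lam"
    and "wiener_norm s lam (\<lambda>x. g x * f x)
           \<le> powr_sum_const s * (wiener_norm s lam g * wiener_norm 0 lam f + wiener_norm 0 lam g * wiener_norm s lam f)"
    using wiener_space_mult_dominated[OF s lam g0 f0 _ sum] dominated by simp_all
qed

lemma sum_geometric_step:
  fixes K :: real
  shows "K * ((\<Sum>j=1..n. (2*K)^j) + 1) = (\<Sum>j=1..Suc n. (2*K)^j) / 2"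
  by (induction n) (simp_all add: algebra_simps)

lemma K_sn_2: "K_sn s 2 = 2 * powr_sum_const s"
  by (simp add: K_sn_def powr_sum_const_def)

lemma K_sn_Suc_ge:
  assumes "1 \<le> m"
  shows "powr_sum_const s * (K_sn s m + 1) \<le> K_sn s (Suc m)"
proof (cases "s \<le> 1")
  case True
  then show ?thesis
    by (simp add: K_sn_def powr_sum_const_def)
next
  case False
  then have "0 \<le> K_s s"
    by (simp add: K_s_def)
  obtain n where m: "m = Suc n"
    using assms by (cases m) auto
  have "powr_sum_const s * (K_sn s m + 1) = K_s s * ((\<Sum>j=1..n. (2 * K_s s)^j) + 1)"
    using False by (simp add: K_sn_def powr_sum_const_def m)
  also have "\<dots> = (\<Sum>j=1..Suc n. (2 * K_s s)^j) / 2"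
    by (rule sum_geometric_step)
  also have "\<dots> \<le> (\<Sum>j=1..Suc n. (2 * K_s s)^j)"
    using \<open>0 \<le> K_s s\<close> by (simp add: sum_nonneg)
  also have "\<dots> = K_sn s (Suc m)"
    using False by (simp add: K_sn_def m)
  finally show ?thesis .
qed

lemma wiener_space_power:
  assumes "0 \<le> s" "0 \<le> lam" "f \<in> wiener_space s lam" "1 \<le> m"
  shows "(\<lambda>x. f x ^ m) \<in> wiener_space s lam"
  using \<open>1 \<le> m\<close>
proof (induction m rule: dec_induct)
  case base
  then show ?case
    using assms(3) by simp
next
  case (step m)
  then show ?case
    using wiener_norm_mult_le(1)[OF assms(1,2) step.IH assms(3)] by (simp add: mult.commute)
qed

lemma wiener_norm_0_power_le:
  assumes "0 \<le> lam" "f \<in> wiener_space 0 lam" "1 \<le> m"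
  shows "wiener_norm 0 lam (\<lambda>x. f x ^ m) \<le> wiener_norm 0 lam f ^ m"
  using \<open>1 \<le> m\<close>
proof (induction m rule: dec_induct)
  case base
  then show ?case
    by simp
next
  case (step m)
  have "wiener_norm 0 lam (\<lambda>x. f x ^ Suc m) = wiener_norm 0 lam (\<lambda>x. f x ^ m * f x)"
    by (simp add: mult.commute)
  also have "\<dots> \<le> wiener_norm 0 lam (\<lambda>x. f x ^ m) * wiener_norm 0 lam f"
    using wiener_norm_0_mult_le(2)[OF assms(1) wiener_space_power[OF order_refl assms(1,2) step.hyps(1)] assms(2)] .
  also have "\<dots> \<le> wiener_norm 0 lam f ^ m * wiener_norm 0 lam f"
    using step.IH wiener_norm_nonneg[OF order_refl assms(1)] by (rule mult_right_mono)
  finally show ?case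
    by (simp add: mult.commute)
qed

text \<open>The induction starts at m = 2 because K_sn s 1 = 0 for s > 1.\<close>

lemma wiener_norm_power_le:
  assumes s: "0 \<le> s" and lam: "0 \<le> lam" and f: "f \<in> wiener_space s lam" and "2 \<le> m"
  shows "wiener_norm s lam (\<lambda>x. f x ^ m) \<le> K_sn s m * wiener_norm 0 lam f ^ (m - 1) * wiener_norm s lam f"
  using \<open>2 \<le> m\<close>
proof (induction m rule: dec_induct)
  case base
  then show ?case
    using wiener_norm_mult_le(2)[OF s lam f f] by (simp add: power2_eq_square K_sn_2 algebra_simps)
next
  case (step m)
  define N0 where "N0 = wiener_norm 0 lam f"
  define Ns where "Ns = wiener_norm s lam f"
  have "N0 \<ge> 0" "Ns \<ge> 0" "powr_sum_const s \<ge> 0"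
    using wiener_norm_nonneg[OF order_refl lam] wiener_norm_nonneg[OF s lam] powr_sum_const_ge_1[of s]
    by (auto simp: N0_def Ns_def)
  have f0: "f \<in> wiener_space 0 lam"
    using f wiener_space_subset_0[OF s lam] by auto
  have "wiener_norm s lam (\<lambda>x. f x ^ Suc m) = wiener_norm s lam (\<lambda>x. f x ^ m * f x)"
    by (simp add: mult.commute)
  also have "\<dots> \<le> powr_sum_const s *
      (wiener_norm s lam (\<lambda>x. f x ^ m) * N0 + wiener_norm 0 lam (\<lambda>x. f x ^ m) * Ns)"
    using wiener_norm_mult_le(2)[OF s lam wiener_space_power[OF s lam f] f] step.hyps(1)
    by (simp add: N0_def Ns_def)
  also have "\<dots> \<le> powr_sum_const s * ((K_sn s m * N0 ^ (m - 1) * Ns) * N0 + N0 ^ m * Ns)"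
    using step.IH wiener_norm_0_power_le[OF lam f0, of m] step.hyps(1) \<open>N0 \<ge> 0\<close> \<open>Ns \<ge> 0\<close>
      \<open>powr_sum_const s \<ge> 0\<close>
    by (intro mult_left_mono add_mono mult_right_mono) (auto simp: N0_def Ns_def)
  also have "\<dots> = powr_sum_const s * (K_sn s m + 1) * (N0 ^ m * Ns)"
    using step.hyps(1) by (cases m) (simp_all add: algebra_simps)
  also have "\<dots> \<le> K_sn s (Suc m) * (N0 ^ m * Ns)"
    using K_sn_Suc_ge[of m s] step.hyps(1) \<open>N0 \<ge> 0\<close> \<open>Ns \<ge> 0\<close> by (intro mult_right_mono) auto
  finally show ?case
    by (simp add: N0_def Ns_def mult.assoc)
qed

theorem proposition3p2:
  fixes s lam :: real and f :: "real \<Rightarrow> complex" and n :: nat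
  assumes "s \<ge> 0" and "lam \<ge> 0" and "f \<in> wiener_space s lam" and "n \<ge> 2"
  shows "(s > 0 \<longrightarrow>
            (\<lambda>x. f x ^ n) \<in> wiener_space s lam \<and>
            wiener_norm s lam (\<lambda>x. f x ^ n)
              \<le> K_sn s n * wiener_norm 0 lam f ^ (n - 1) * wiener_norm s lam f)
       \<and> (s = 0 \<longrightarrow>
            (\<lambda>x. f x ^ n) \<in> wiener_space 0 lam \<and>
            wiener_norm 0 lam (\<lambda>x. f x ^ n) \<le> wiener_norm 0 lam f ^ n)"
proof -
  have "1 \<le> n"
    using assms(4) by simp
  then show ?thesis
    using assms wiener_space_power wiener_norm_power_le wiener_norm_0_power_le by auto
qed

end
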